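(* Let $\dot x = f(x,u) = g(x)+h(x)u$ and assume there exists a Lyapunov function $V$ such that under the policy $\mu(x)$ the state is asymptotically stable, i.e. $\dot V(x)<0$ for all $x\in\mathcal{B} = \{x\in\mathbb{R}^n : \Vert x\Vert < r\}$, $r>0$. Consider the trajectory $x(t)$ starting at $x(0)$ that applies $\mu(x(t))$ except on $[\tau,\tau+\lambda]$, where it applies $\mu_\star(t) = -R^{-1}h(x(t))^\top\rho(t) + \mu(x(t))$, and let $t\ge\tau+\lambda$. Then $$V(x(t)) - V(x(t),\mu(x(t))) \le \lambda\beta,$$ where $V(x(t),\mu(x(t))) := V(x(0)) + \int_0^t \frac{\partial V}{\partial x}(x(s))\, f(x(s),\mu(x(s)))\,ds$ and $$\beta = \sup_{t\in[\tau,\tau+\lambda]} -\frac{\partial V}{\partial x}(x(t))\,h(x(t))R^{-1}h(x(t))^\top\rho(t).$$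
   Context: $x\in\mathbb{R}^n$, $u\in\mathbb{R}^m$, $g:\mathbb{R}^n\to\mathbb{R}^n$, $h:\mathbb{R}^n\to\mathbb{R}^{n\times m}$, $\mu:\mathbb{R}^n\to\mathbb{R}^m$ an equilibrium policy, $R\in\mathbb{R}^{m\times m}$ positive definite, $\tau$ a switching time and $\lambda\ge 0$ a switching duration. $\rho$ is the adjoint solving $\dot\rho = -\left(\frac{\partial \ell}{\partial x} + \frac{\partial \mu}{\partial x}^\top\frac{\partial \ell}{\partial u} - \frac{\eta}{T_r}\sum_{i=1}^N \frac{p(s_i)}{q(s_i)}\left(\frac{\partial \gamma_i}{\partial x} + \frac{\partial \mu}{\partial x}^\top \frac{\partial \gamma_i}{\partial u}\right)\right) - \left(\frac{\partial f}{\partial x} + \frac{\partial f}{\partial u}\frac{\partial \mu}{\partial x}\right)^\top \rho$ with $\rho(t_i+T)=\frac{\partial m}{\partial x}(x(t_i+T))$ along the nominal trajectory under $\mu$ on a horizon $[t_i,t_i+T]$, where $\ell$ is a running cost, $m$ a terminal cost, $s_1,\dots,s_N$ uniform samples from a search domain $\mathcal{X}^v\subset\mathbb{R}^{n+m}$, $p$ a target density, $q(s)=\frac{\eta}{T_r}\int_{t_i-t_r}^{t_i+T}\exp[-\tfrac12(s-x_v(t))^\top\Sigma^{-1}(s-x_v(t))]dt$ with $x_v$ the part of the state–action pair in $\mathcal{X}^v$, $\Sigma$ positive definite, $\eta$ normalizing, $T_r=T+t_r$, and $\gamma_i=\exp[-\tfrac12(s_i-x_v)^\top\Sigma^{-1}(s_i-x_v)]$.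 *)

theory Defs
  imports "HOL-Analysis.Analysis"
begin

definition ctrl_aff ::
  "(real^'n \<Rightarrow> real^'n) \<Rightarrow> (real^'n \<Rightarrow> real^'m^'n) \<Rightarrow> real^'n \<Rightarrow> real^'m \<Rightarrow> real^'n"
  where "ctrl_aff g h x u = g x + h x *v u"

definition pos_def_mat :: "real^'m^'m \<Rightarrow> bool"
  where "pos_def_mat R \<longleftrightarrow> transpose R = R \<and> (\<forall>v. v \<noteq> 0 \<longrightarrow> v \<bullet> (R *v v) > 0)"

definition mu_star ::
  "(real^'n \<Rightarrow> real^'m^'n) \<Rightarrow> real^'m^'m \<Rightarrow> (real \<Rightarrow> real^'n) \<Rightarrow> (real^'n \<Rightarrow> real^'m)
   \<Rightarrow> (real \<Rightarrow> real^'n) \<Rightarrow> real \<Rightarrow> real^'m"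
  where "mu_star h R rho \<mu> x t =
     - (matrix_inv R *v (transpose (h (x t)) *v rho t)) + \<mu> (x t)"

definition switched_input ::
  "(real^'n \<Rightarrow> real^'m^'n) \<Rightarrow> real^'m^'m \<Rightarrow> (real \<Rightarrow> real^'n) \<Rightarrow> (real^'n \<Rightarrow> real^'m)
   \<Rightarrow> real \<Rightarrow> real \<Rightarrow> (real \<Rightarrow> real^'n) \<Rightarrow> real \<Rightarrow> real^'m"
  where "switched_input h R rho \<mu> \<tau> lam x t =
     (if t \<in> {\<tau>..\<tau>+lam} then mu_star h R rho \<mu> x t else \<mu> (x t))"

end

theory Submission
  imports Defs
begin

text \<open>Along the switched trajectory, V(x(t)) - V(x(0)) is the integral of the derivative of V
  along the actual dynamics. On [\<tau>, \<tau>+\<lambda>] the applied input differs from \<mu>(x) by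
  -R^-1 h(x)^T \<rho>, elsewhere it is \<mu>(x); so the difference to the nominal Lyapunov
  integral is the integral of the continuous function
  -DV(x) h(x) R^-1 h(x)^T \<rho> over an interval of length \<lambda>, which is at most \<lambda> times
  its supremum.\<close>

lemma continuous_on_matrix_vector_mult [continuous_intros]:
  assumes "continuous_on S A" "continuous_on S v"
  shows "continuous_on S (\<lambda>s. (A s :: real^'m^'n) *v v s)"
  unfolding matrix_vector_mult_def by (intro continuous_intros assms)

lemma continuous_on_vector_matrix_mult [continuous_intros]:
  assumes "continuous_on S v" "continuous_on S A"
  shows "continuous_on S (\<lambda>s. v s v* (A s :: real^'m^'n))"
  unfolding vector_matrix_mult_def by (intro continuous_intros assms)

lemma fundamental_theorem_of_calculus_gradient:
  fixes V :: "'a::real_inner \<Rightarrow> real" and x :: "real \<Rightarrow> 'a"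
  assumes V_deriv: "\<And>y. (V has_derivative (\<lambda>v. DV y \<bullet> v)) (at y)"
    and "finite S" "a \<le> b" and x_cont: "continuous_on {a..b} x"
    and x_deriv: "\<And>s. s \<in> {a<..<b} - S \<Longrightarrow> (x has_vector_derivative x' s) (at s within {a..b})"
  shows "((\<lambda>s. DV (x s) \<bullet> x' s) has_integral V (x b) - V (x a)) {a..b}"
proof -
  have "continuous_on UNIV V"
    using V_deriv has_derivative_continuous continuous_at_imp_continuous_on by blast
  then have cont: "continuous_on {a..b} (V \<circ> x)"
    using continuous_on_compose2[OF _ x_cont, of UNIV V] by (simp add: o_def)
  have deriv: "((V \<circ> x) has_vector_derivative DV (x s) \<bullet> x' s) (at s)"
    if s: "s \<in> {a<..<b} - S" for s
  proof -
    have "(x has_vector_derivative x' s) (at s)"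
      using x_deriv[OF s] s at_within_Icc_at[of a s b] by auto
    from diff_chain_at[OF this[unfolded has_vector_derivative_def] V_deriv]
    show ?thesis
      by (simp add: has_vector_derivative_def o_def mult.commute)
  qed
  from fundamental_theorem_of_calculus_interior_strong[OF \<open>finite S\<close> \<open>a \<le> b\<close> deriv cont]
  show ?thesis by simp
qed

lemma has_integral_le_length_mult_SUP:
  fixes k :: "real \<Rightarrow> real"
  assumes "(k has_integral I) {a..b}" "continuous_on {a..b} k" "a \<le> b"
  shows "I \<le> (b - a) * (SUP s\<in>{a..b}. k s)"
proof -
  have "bdd_above (k ` {a..b})"
    using assms(2) by (intro bounded_imp_bdd_above compact_imp_bounded compact_continuous_image) auto
  then have "k s \<le> (SUP s\<in>{a..b}. k s)" if "s \<in> {a..b}" for s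
    using that by (intro cSUP_upper)
  then have "I \<le> integral {a..b} (\<lambda>_. SUP s\<in>{a..b}. k s)"
    using has_integral_le[OF assms(1) integrable_integral[OF integrable_const_ivl]] by fastforce
  with \<open>a \<le> b\<close> show ?thesis by simp
qed

lemma ctrl_aff_switched_input:
  "ctrl_aff g h (x s) (switched_input h R \<rho> \<mu> \<tau> lam x s) =
     ctrl_aff g h (x s) (\<mu> (x s))
     - (if s \<in> {\<tau>..\<tau>+lam} then h (x s) *v (matrix_inv R *v (transpose (h (x s)) *v \<rho> s)) else 0)"
  by (simp add: ctrl_aff_def switched_input_def mu_star_def algebra_simps
      linear_neg[OF matrix_vector_mul_linear] del: atLeastAtMost_iff transpose_matrix_vector)

theorem theorem1:
  fixes g :: "real^'n \<Rightarrow> real^'n" and h :: "real^'n \<Rightarrow> real^'m^'n"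
    and \<mu> :: "real^'n \<Rightarrow> real^'m" and R :: "real^'m^'m"
    and V :: "real^'n \<Rightarrow> real" and DV :: "real^'n \<Rightarrow> real^'n"
    and \<rho> :: "real \<Rightarrow> real^'n" and x :: "real \<Rightarrow> real^'n"
    and r \<tau> lam t :: real
  assumes cont_g: "continuous_on UNIV g"
    and cont_h: "continuous_on UNIV h"
    and cont_mu: "continuous_on UNIV \<mu>"
    and R_pd: "pos_def_mat R"
    and V_deriv: "\<And>y. (V has_derivative (\<lambda>v. DV y \<bullet> v)) (at y)"
    and cont_DV: "continuous_on UNIV DV"
    and r_pos: "r > 0"
    and lyap_zero: "V 0 = 0"
    and lyap_pos: "\<And>y. y \<noteq> 0 \<Longrightarrow> norm y < r \<Longrightarrow> V y > 0"
    and lyap_dec: "\<And>y. y \<noteq> 0 \<Longrightarrow> norm y < r \<Longrightarrow> DV y \<bullet> ctrl_aff g h y (\<mu> y) < 0"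
    and cont_rho: "continuous_on {\<tau>..\<tau>+lam} \<rho>"
    and tau_nonneg: "\<tau> \<ge> 0" and lam_nonneg: "lam \<ge> 0"
    and t_ge: "t \<ge> \<tau> + lam"
    and x_cont: "continuous_on {0..t} x"
    and x_ode: "\<And>s. s \<in> {0..t} - {\<tau>, \<tau>+lam} \<Longrightarrow>
       (x has_vector_derivative
          ctrl_aff g h (x s) (switched_input h R \<rho> \<mu> \<tau> lam x s)) (at s within {0..t})"
  shows "V (x t) - (V (x 0) + integral {0..t} (\<lambda>s. DV (x s) \<bullet> ctrl_aff g h (x s) (\<mu> (x s))))
         \<le> lam * (SUP s\<in>{\<tau>..\<tau>+lam}.
               - (DV (x s) \<bullet> (h (x s) *v (matrix_inv R *v (transpose (h (x s)) *v \<rho> s)))))"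
proof -
  define G where "G s = DV (x s) \<bullet> ctrl_aff g h (x s) (\<mu> (x s))" for s
  define k where "k s = - (DV (x s) \<bullet> (h (x s) *v (matrix_inv R *v (transpose (h (x s)) *v \<rho> s))))" for s
  have interval: "{\<tau>..\<tau>+lam} \<subseteq> {0..t}" "0 \<le> t"
    using tau_nonneg lam_nonneg t_ge by auto
  have "((\<lambda>s. DV (x s) \<bullet> ctrl_aff g h (x s) (switched_input h R \<rho> \<mu> \<tau> lam x s))
          has_integral V (x t) - V (x 0)) {0..t}"
    by (rule fundamental_theorem_of_calculus_gradient[OF V_deriv _ \<open>0 \<le> t\<close> x_cont, of "{\<tau>, \<tau>+lam}"])
      (auto intro: x_ode)
  moreover have "DV (x s) \<bullet> ctrl_aff g h (x s) (switched_input h R \<rho> \<mu> \<tau> lam x s)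
                   = G s + (if s \<in> {\<tau>..\<tau>+lam} then k s else 0)" for s
    by (simp add: ctrl_aff_switched_input G_def k_def inner_diff_right
        del: atLeastAtMost_iff transpose_matrix_vector)
  ultimately have F_int: "((\<lambda>s. G s + (if s \<in> {\<tau>..\<tau>+lam} then k s else 0))
                     has_integral V (x t) - V (x 0)) {0..t}"
    by simp
  have along_x: "continuous_on S (\<lambda>s. F (x s))"
    if "continuous_on UNIV F" "S \<subseteq> {0..t}" for F :: "real^'n \<Rightarrow> 'b::topological_space" and S
    using continuous_on_compose2[OF that(1) continuous_on_subset[OF x_cont that(2)]] by simp
  have "continuous_on {0..t} G"
    unfolding G_def ctrl_aff_def
    by (intro continuous_intros along_x[OF cont_g] along_x[OF cont_h] along_x[OF cont_mu]
        along_x[OF cont_DV]) simp_all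
  from has_integral_diff[OF F_int integrable_integral[OF integrable_continuous_interval[OF this]]]
  have "((\<lambda>s. if s \<in> {\<tau>..\<tau>+lam} then k s else 0)
          has_integral V (x t) - V (x 0) - integral {0..t} G) {0..t}"
    by simp
  then have "(k has_integral V (x t) - V (x 0) - integral {0..t} G) {\<tau>..\<tau>+lam}"
    by (simp only: has_integral_restrict[OF interval(1)])
  moreover have "continuous_on {\<tau>..\<tau>+lam} k"
    unfolding k_def transpose_matrix_vector
    by (intro continuous_intros along_x[OF cont_h] along_x[OF cont_DV] cont_rho interval(1))
  ultimately have "V (x t) - V (x 0) - integral {0..t} G
                     \<le> (\<tau> + lam - \<tau>) * (SUP s\<in>{\<tau>..\<tau>+lam}. k s)"
    using lam_nonneg by (intro has_integral_le_length_mult_SUP) auto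
  then show ?thesis
    unfolding G_def k_def by (simp add: algebra_simps)
qed

end
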